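(* Let $U$ be a commutative supertropical monoid with $M:=eU$. (i) The supertropical monoid $\hat U:=U/E(U,D(U))$ is a semiring. (ii) The ideal compression $\sigma_U:=\pi_{E(U,D(U))}:U\to\hat U$ is universal among all fiber contractions $\alpha:U\to V$ with $V$ a semiring: given such a fiber contraction $\alpha$, there is a unique fiber contraction $\beta:\hat U\to V$ with $\alpha=\beta\circ\sigma_U$ (and if $\alpha$ is a fiber contraction over $M$, so is $\beta$).
   Context: All monoids are commutative. A supertropical monoid is a monoid $(U,\cdot)$ with absorbing element $0$ and distinguished idempotent $e$ with $ex=0\Rightarrow x=0$, together with a total ordering on $M:=eU$, compatible with multiplication and with $0$ least, making $M$ a bipotent semiring (addition $=\max$). Define on $U$: $x+y:=y$ if $ex<ey$, $x$ if $ex>ey$, $ex$ if $ex=ey$; $U$ is a semiring if this addition is associative and distributive. A transmission $\alpha:U\to V$ is a map with $\alpha(0)=0$, $\alpha(1)=1$, multiplicative, $\alpha(e_U)=e_V$, order-preserving on $eU$. A fiber contraction is a surjective transmission whose restriction $eU\to eV$ is an isomorphism; over $M$ if $eV=M$ and that restriction is $\mathrm{id}_M$. An element $x\in U$ is an NC-product if there exist $y,z\in U$ and $y'\in M$ with $x=yz$, $y'<ey$, $y'z=eyz$; $D_0(U)$ is the set of NC-products and $D(U):=D_0(U)\cup M$ (an ideal of $U$ containing $M$). $E(U,D(U))$ is the equivalence relation: $x\sim y$ iff $x=y$, or $x,y\in D(U)$ and $ex=ey$; it is a TE-relation and $U/E(U,D(U))$ carries the unique supertropical monoid structure making the projection $\pi_{E(U,D(U))}$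 a transmission, with ghost ideal identified with $M$. *)

theory Defs
  imports Main
begin

record 'a stm =
  stm_carrier :: "'a set"
  stm_mult    :: "'a \<Rightarrow> 'a \<Rightarrow> 'a"
  stm_one     :: 'a
  stm_zero    :: 'a
  stm_e       :: 'a
  stm_le      :: "'a \<Rightarrow> 'a \<Rightarrow> bool"  \<comment> \<open>total order on the ghost ideal M = eU\<close>

definition ghosts :: "('a, 'm) stm_scheme \<Rightarrow> 'a set" where
  "ghosts U = (\<lambda>x. stm_mult U (stm_e U) x) ` stm_carrier U"

definition stm_lt :: "('a, 'm) stm_scheme \<Rightarrow> 'a \<Rightarrow> 'a \<Rightarrow> bool" where
  "stm_lt U x y \<longleftrightarrow> stm_le U x y \<and> x \<noteq> y"

definition supertropical_monoid :: "('a, 'm) stm_scheme \<Rightarrow> bool" where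
  "supertropical_monoid U \<longleftrightarrow>
     (let C = stm_carrier U; mul = stm_mult U; e = stm_e U; M = ghosts U; le = stm_le U in
      \<comment> \<open>commutative monoid\<close>
      (\<forall>x\<in>C. \<forall>y\<in>C. mul x y \<in> C) \<and>
      (\<forall>x\<in>C. \<forall>y\<in>C. \<forall>z\<in>C. mul (mul x y) z = mul x (mul y z)) \<and>
      (\<forall>x\<in>C. \<forall>y\<in>C. mul x y = mul y x) \<and>
      stm_one U \<in> C \<and> (\<forall>x\<in>C. mul (stm_one U) x = x) \<and>
      \<comment> \<open>absorbing zero\<close>
      stm_zero U \<in> C \<and> (\<forall>x\<in>C. mul (stm_zero U) x = stm_zero U) \<and>
      \<comment> \<open>distinguished idempotent e with ex = 0 implies x = 0\<close>
      e \<in> C \<and> mul e e = e \<and> (\<forall>x\<in>C. mul e x = stm_zero U \<longrightarrow> x = stm_zero U) \<and>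
      \<comment> \<open>total ordering on M, compatible with multiplication, 0 least\<close>
      (\<forall>x\<in>M. le x x) \<and>
      (\<forall>x\<in>M. \<forall>y\<in>M. le x y \<and> le y x \<longrightarrow> x = y) \<and>
      (\<forall>x\<in>M. \<forall>y\<in>M. \<forall>z\<in>M. le x y \<and> le y z \<longrightarrow> le x z) \<and>
      (\<forall>x\<in>M. \<forall>y\<in>M. le x y \<or> le y x) \<and>
      (\<forall>x\<in>M. \<forall>y\<in>M. \<forall>z\<in>M. le x y \<longrightarrow> le (mul x z) (mul y z)) \<and>
      (\<forall>x\<in>M. le (stm_zero U) x))"

definition stm_add :: "('a, 'm) stm_scheme \<Rightarrow> 'a \<Rightarrow> 'a \<Rightarrow> 'a" where
  "stm_add U x y =
     (let ex = stm_mult U (stm_e U) x; ey = stm_mult U (stm_e U) y in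
      if stm_lt U ex ey then y else if stm_lt U ey ex then x else ex)"

definition stm_semiring :: "('a, 'm) stm_scheme \<Rightarrow> bool" where
  "stm_semiring U \<longleftrightarrow> supertropical_monoid U \<and>
     (\<forall>x\<in>stm_carrier U. \<forall>y\<in>stm_carrier U. \<forall>z\<in>stm_carrier U.
        stm_add U (stm_add U x y) z = stm_add U x (stm_add U y z)) \<and>
     (\<forall>x\<in>stm_carrier U. \<forall>y\<in>stm_carrier U. \<forall>z\<in>stm_carrier U.
        stm_mult U x (stm_add U y z) = stm_add U (stm_mult U x y) (stm_mult U x z))"

definition transmission ::
  "('a, 'm) stm_scheme \<Rightarrow> ('b, 'n) stm_scheme \<Rightarrow> ('a \<Rightarrow> 'b) \<Rightarrow> bool" where
  "transmission U V \<alpha> \<longleftrightarrow>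
     (\<forall>x\<in>stm_carrier U. \<alpha> x \<in> stm_carrier V) \<and>
     \<alpha> (stm_zero U) = stm_zero V \<and> \<alpha> (stm_one U) = stm_one V \<and>
     (\<forall>x\<in>stm_carrier U. \<forall>y\<in>stm_carrier U. \<alpha> (stm_mult U x y) = stm_mult V (\<alpha> x) (\<alpha> y)) \<and>
     \<alpha> (stm_e U) = stm_e V \<and>
     (\<forall>x\<in>ghosts U. \<forall>y\<in>ghosts U. stm_le U x y \<longrightarrow> stm_le V (\<alpha> x) (\<alpha> y))"

definition fiber_contraction ::
  "('a, 'm) stm_scheme \<Rightarrow> ('b, 'n) stm_scheme \<Rightarrow> ('a \<Rightarrow> 'b) \<Rightarrow> bool" where
  "fiber_contraction U V \<alpha> \<longleftrightarrow>
     transmission U V \<alpha> \<and> \<alpha> ` stm_carrier U = stm_carrier V \<and>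
     bij_betw \<alpha> (ghosts U) (ghosts V) \<and>
     (\<forall>x\<in>ghosts U. \<forall>y\<in>ghosts U. stm_le V (\<alpha> x) (\<alpha> y) \<longleftrightarrow> stm_le U x y)"

definition fiber_contraction_over ::
  "('a, 'm) stm_scheme \<Rightarrow> ('a, 'n) stm_scheme \<Rightarrow> ('a \<Rightarrow> 'a) \<Rightarrow> bool" where
  "fiber_contraction_over U V \<alpha> \<longleftrightarrow>
     fiber_contraction U V \<alpha> \<and> ghosts V = ghosts U \<and> (\<forall>x\<in>ghosts U. \<alpha> x = x)"

definition NC_product :: "('a, 'm) stm_scheme \<Rightarrow> 'a \<Rightarrow> bool" where
  "NC_product U x \<longleftrightarrow>
     (\<exists>y\<in>stm_carrier U. \<exists>z\<in>stm_carrier U. \<exists>y'\<in>ghosts U.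
        x = stm_mult U y z \<and> stm_lt U y' (stm_mult U (stm_e U) y) \<and>
        stm_mult U y' z = stm_mult U (stm_e U) (stm_mult U y z))"

definition D0 :: "('a, 'm) stm_scheme \<Rightarrow> 'a set" where
  "D0 U = {x \<in> stm_carrier U. NC_product U x}"

definition DD :: "('a, 'm) stm_scheme \<Rightarrow> 'a set" where
  "DD U = D0 U \<union> ghosts U"

definition E_rel :: "('a, 'm) stm_scheme \<Rightarrow> 'a set \<Rightarrow> ('a \<times> 'a) set" where
  "E_rel U D = {(x, y). x \<in> stm_carrier U \<and> y \<in> stm_carrier U \<and>
      (x = y \<or> (x \<in> D \<and> y \<in> D \<and> stm_mult U (stm_e U) x = stm_mult U (stm_e U) y))}"

definition EU :: "('a, 'm) stm_scheme \<Rightarrow> ('a \<times> 'a) set" where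
  "EU U = E_rel U (DD U)"

definition sigma :: "('a, 'm) stm_scheme \<Rightarrow> 'a \<Rightarrow> 'a set" where
  "sigma U x = EU U `` {x}"

definition qrep :: "'a set \<Rightarrow> 'a" where
  "qrep X = (SOME x. x \<in> X)"

text \<open>The quotient supertropical monoid U/E(U,D(U)): the unique structure making
  the projection a transmission (multiplication of representatives, ordering of ghost
  classes induced from M via e).\<close>
definition quot :: "('a, 'm) stm_scheme \<Rightarrow> 'a set stm" where
  "quot U = \<lparr> stm_carrier = stm_carrier U // EU U,
              stm_mult = (\<lambda>X Y. sigma U (stm_mult U (qrep X) (qrep Y))),
              stm_one = sigma U (stm_one U),
              stm_zero = sigma U (stm_zero U),
              stm_e = sigma U (stm_e U),
              stm_le = (\<lambda>X Y. stm_le U (stm_mult U (stm_e U) (qrep X))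
                                       (stm_mult U (stm_e U) (qrep Y))) \<rparr>"

end

theory Submission
  imports Defs
begin

text \<open>
  Distributivity \<open>x (y + z) = x y + x z\<close> of the supertropical addition can only fail
  when \<open>e y < e z\<close> and \<open>e (x y) = e (x z)\<close>; then \<open>z x\<close> is an NC-product witnessed
  by \<open>y' = e y\<close>, and the law holds iff it is ghost. Conversely, in a semiring every
  NC-product is ghost. So a supertropical monoid is a semiring iff \<open>D\<^sub>0(U) \<subseteq> eU\<close>.
  The relation \<open>E(U, D(U))\<close> identifies every element of \<open>D(U)\<close> with its ghost, and an
  NC-product of the quotient lifts to an NC-product of \<open>U\<close>, so the quotient is a semiring.
  A fiber contraction \<open>\<alpha>\<close> into a semiring is injective on ghosts, hence maps NC-products
  to NC-products, which are ghost in the target; so \<open>\<alpha> x = \<alpha> (e x)\<close> on \<open>D(U)\<close>, \<open>\<alpha>\<close>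
  is constant on the classes of \<open>E(U, D(U))\<close> and factors uniquely through the quotient.
\<close>

locale supertropical =
  fixes U :: "('a, 'm) stm_scheme"
  assumes supertropical: "supertropical_monoid U"
begin

abbreviation "C \<equiv> stm_carrier U"
abbreviation "mul \<equiv> stm_mult U"
abbreviation "e \<equiv> stm_e U"
abbreviation "M \<equiv> ghosts U"
abbreviation "le \<equiv> stm_le U"
abbreviation "lt \<equiv> stm_lt U"
abbreviation "add \<equiv> stm_add U"

lemmas supertropical_unfolded = supertropical[unfolded supertropical_monoid_def Let_def]

lemma mult_closed: "x \<in> C \<Longrightarrow> y \<in> C \<Longrightarrow> mul x y \<in> C"
  using supertropical_unfolded by (elim conjE) blast

lemma mult_assoc: "x \<in> C \<Longrightarrow> y \<in> C \<Longrightarrow> z \<in> C \<Longrightarrow> mul (mul x y) z = mul x (mul y z)"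
  using supertropical_unfolded by (elim conjE) blast

lemma mult_comm: "x \<in> C \<Longrightarrow> y \<in> C \<Longrightarrow> mul x y = mul y x"
  using supertropical_unfolded by (elim conjE) blast

lemma one_closed: "stm_one U \<in> C"
  using supertropical_unfolded by (elim conjE) blast

lemma mult_one: "x \<in> C \<Longrightarrow> mul (stm_one U) x = x"
  using supertropical_unfolded by (elim conjE) blast

lemma zero_closed: "stm_zero U \<in> C"
  using supertropical_unfolded by (elim conjE) blast

lemma mult_zero: "x \<in> C \<Longrightarrow> mul (stm_zero U) x = stm_zero U"
  using supertropical_unfolded by (elim conjE) blast

lemma e_closed: "e \<in> C"
  using supertropical_unfolded by (elim conjE) blast

lemma e_idem: "mul e e = e"
  using supertropical_unfolded by (elim conjE) blast

lemma e_mult_eq_zero: "x \<in> C \<Longrightarrow> mul e x = stm_zero U \<Longrightarrow> x = stm_zero U"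
  using supertropical_unfolded by (elim conjE) blast

lemma le_refl: "x \<in> M \<Longrightarrow> le x x"
  using supertropical_unfolded by (elim conjE) blast

lemma le_antisym: "x \<in> M \<Longrightarrow> y \<in> M \<Longrightarrow> le x y \<Longrightarrow> le y x \<Longrightarrow> x = y"
  using supertropical_unfolded by (elim conjE) blast

lemma le_trans: "x \<in> M \<Longrightarrow> y \<in> M \<Longrightarrow> z \<in> M \<Longrightarrow> le x y \<Longrightarrow> le y z \<Longrightarrow> le x z"
  using supertropical_unfolded by (elim conjE) blast

lemma le_total: "x \<in> M \<Longrightarrow> y \<in> M \<Longrightarrow> le x y \<or> le y x"
  using supertropical_unfolded by (elim conjE) blast

lemma le_mult_right: "x \<in> M \<Longrightarrow> y \<in> M \<Longrightarrow> z \<in> M \<Longrightarrow> le x y \<Longrightarrow> le (mul x z) (mul y z)"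
  using supertropical_unfolded by (elim conjE) meson

lemma zero_le: "x \<in> M \<Longrightarrow> le (stm_zero U) x"
  using supertropical_unfolded by (elim conjE) meson

lemma ghost_iff: "x \<in> M \<longleftrightarrow> x \<in> C \<and> mul e x = x"
proof
  assume "x \<in> M"
  then obtain w where "w \<in> C" "x = mul e w"
    by (auto simp: ghosts_def)
  then show "x \<in> C \<and> mul e x = x"
    using e_closed e_idem mult_closed mult_assoc[of e e w] by simp
next
  assume "x \<in> C \<and> mul e x = x"
  then show "x \<in> M"
    unfolding ghosts_def by force
qed

lemma ghost_closed: "x \<in> M \<Longrightarrow> x \<in> C"
  by (simp add: ghost_iff)

lemma e_mult_ghost: "x \<in> C \<Longrightarrow> mul e x \<in> M"
  by (simp add: ghosts_def)

lemma e_mult_e_mult: "x \<in> C \<Longrightarrow> mul e (mul e x) = mul e x"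
  using e_mult_ghost ghost_iff by blast

lemma e_mult_assoc: "x \<in> C \<Longrightarrow> y \<in> C \<Longrightarrow> mul e (mul x y) = mul (mul e x) y"
  using mult_assoc[of e x y] e_closed by simp

lemma mult_e_mult: "x \<in> C \<Longrightarrow> y \<in> C \<Longrightarrow> mul x (mul e y) = mul e (mul x y)"
  using mult_assoc[of x e y] mult_assoc[of e x y] mult_comm[of x e] e_closed by simp

lemma e_mult_distrib:
  assumes "x \<in> C" "y \<in> C"
  shows "mul e (mul x y) = mul (mul e x) (mul e y)"
proof -
  have "mul (mul e x) (mul e y) = mul e (mul x (mul e y))"
    using mult_assoc e_closed mult_closed assms by simp
  also have "\<dots> = mul e (mul x y)"
    using mult_e_mult e_mult_e_mult mult_closed assms by simp
  finally show ?thesis ..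
qed

lemma ghost_mult: "g \<in> M \<Longrightarrow> w \<in> C \<Longrightarrow> mul g w \<in> M"
  using ghost_iff e_mult_assoc mult_closed by simp

lemma zero_ghost: "stm_zero U \<in> M"
  using ghost_iff zero_closed mult_zero[OF e_closed] mult_comm[OF e_closed zero_closed] by simp

lemma lt_asym: "x \<in> M \<Longrightarrow> y \<in> M \<Longrightarrow> lt x y \<Longrightarrow> \<not> lt y x"
  using le_antisym by (auto simp: stm_lt_def)

lemma lt_le_trans: "x \<in> M \<Longrightarrow> y \<in> M \<Longrightarrow> z \<in> M \<Longrightarrow> lt x y \<Longrightarrow> le y z \<Longrightarrow> lt x z"
  unfolding stm_lt_def using le_trans le_antisym by blast

lemma lt_trans: "x \<in> M \<Longrightarrow> y \<in> M \<Longrightarrow> z \<in> M \<Longrightarrow> lt x y \<Longrightarrow> lt y z \<Longrightarrow> lt x z"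
  using lt_le_trans[of x y z] by (simp add: stm_lt_def)

lemma lt_trichotomy: "x \<in> M \<Longrightarrow> y \<in> M \<Longrightarrow> lt x y \<or> lt y x \<or> x = y"
  using le_total by (auto simp: stm_lt_def)

lemma e_mult_le_mono:
  assumes "x \<in> C" "y \<in> C" "z \<in> C" "le (mul e y) (mul e z)"
  shows "le (mul e (mul x y)) (mul e (mul x z))"
  using le_mult_right[OF e_mult_ghost e_mult_ghost e_mult_ghost assms(4), OF assms(2,3,1)]
    e_mult_distrib mult_comm e_closed mult_closed assms(1-3) by metis

lemma add_less: "x \<in> C \<Longrightarrow> y \<in> C \<Longrightarrow> lt (mul e x) (mul e y) \<Longrightarrow> add x y = y"
  by (simp add: stm_add_def)

lemma add_greater: "x \<in> C \<Longrightarrow> y \<in> C \<Longrightarrow> lt (mul e y) (mul e x) \<Longrightarrow> add x y = x"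
  using lt_asym[OF e_mult_ghost e_mult_ghost, of y x] by (simp add: stm_add_def)

lemma add_equal: "mul e x = mul e y \<Longrightarrow> add x y = mul e x"
  by (simp add: stm_add_def stm_lt_def)

lemma add_closed: "x \<in> C \<Longrightarrow> y \<in> C \<Longrightarrow> add x y \<in> C"
  using mult_closed e_closed by (simp add: stm_add_def Let_def)

lemma le_e_mult_add:
  assumes "x \<in> C" "y \<in> C"
  shows "le (mul e y) (mul e (add x y))"
  using lt_trichotomy[OF e_mult_ghost e_mult_ghost, OF assms]
proof (elim disjE)
  assume "lt (mul e x) (mul e y)"
  then show ?thesis
    using add_less le_refl e_mult_ghost assms by simp
next
  assume "lt (mul e y) (mul e x)"
  then show ?thesis
    using add_greater assms by (simp add: stm_lt_def)
next
  assume "mul e x = mul e y"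
  then show ?thesis
    using add_equal e_mult_e_mult le_refl e_mult_ghost assms by simp
qed

lemma add_comm: "x \<in> C \<Longrightarrow> y \<in> C \<Longrightarrow> add x y = add y x"
  using lt_trichotomy[OF e_mult_ghost e_mult_ghost, of x y] add_less add_greater add_equal
  by metis

lemma add_assoc:
  assumes x: "x \<in> C" and y: "y \<in> C" and z: "z \<in> C"
  shows "add (add x y) z = add x (add y z)"
proof -
  have X: "mul e x \<in> M" and Y: "mul e y \<in> M" and Z: "mul e z \<in> M"
    using e_mult_ghost x y z by auto
  have ee: "mul e (mul e x) = mul e x" "mul e (mul e y) = mul e y"
    using e_mult_e_mult x y by auto
  have eC: "mul e x \<in> C" "mul e y \<in> C"
    using mult_closed e_closed x y by auto
  consider (xy) "lt (mul e x) (mul e y)" | (yx) "lt (mul e y) (mul e x)" | (x_y) "mul e x = mul e y"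
    using lt_trichotomy[OF X Y] by blast
  then show ?thesis
  proof cases
    case xy
    have "lt (mul e x) (mul e (add y z))"
      using lt_le_trans[OF X Y _ xy] le_e_mult_add[OF z y] add_comm[OF y z]
        e_mult_ghost add_closed y z by simp
    then show ?thesis
      using add_less[OF x y xy] add_less[OF x add_closed[OF y z]] by simp
  next
    case yx
    consider (yz) "lt (mul e y) (mul e z)" | (zy) "lt (mul e z) (mul e y)" | (y_z) "mul e y = mul e z"
      using lt_trichotomy[OF Y Z] by blast
    then show ?thesis
    proof cases
      case yz
      then show ?thesis using add_greater[OF x y yx] add_less[OF y z] by simp
    next
      case zy
      have "lt (mul e z) (mul e x)" using lt_trans[OF Z Y X zy yx] .
      then show ?thesis using add_greater[OF x y yx] add_greater[OF y z zy] add_greater[OF x z] by simp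
    next
      case y_z
      then show ?thesis
        using add_greater[OF x y yx] add_equal[OF y_z] add_greater[OF x z] add_greater[OF x eC(2)] yx ee
        by simp
    qed
  next
    case x_y
    consider (yz) "lt (mul e y) (mul e z)" | (zy) "lt (mul e z) (mul e y)" | (y_z) "mul e y = mul e z"
      using lt_trichotomy[OF Y Z] by blast
    then show ?thesis
    proof cases
      case yz
      then show ?thesis
        using add_equal[OF x_y] add_less[OF y z] add_less[OF eC(1) z] add_less[OF x z] x_y ee by simp
    next
      case zy
      then show ?thesis
        using add_equal[OF x_y] add_greater[OF y z] add_greater[OF eC(1) z] x_y ee
        by (simp add: add_equal)
    next
      case y_z
      then show ?thesis using add_equal[OF x_y] add_equal[OF y_z] x_y ee by (simp add: add_equal)
    qed
  qed
qed

lemma NC_productI: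
  assumes "y \<in> C" "z \<in> C" "y' \<in> M" "lt y' (mul e y)" "mul y' z = mul e (mul y z)"
  shows "NC_product U (mul y z)"
  using assms unfolding NC_product_def by blast

lemma NC_productE:
  assumes "NC_product U x"
  obtains y z y' where "y \<in> C" "z \<in> C" "y' \<in> M" "x = mul y z" "lt y' (mul e y)"
    "mul y' z = mul e (mul y z)"
  using assms unfolding NC_product_def by blast

lemma distrib_if_NC_products_ghost:
  assumes NC: "D0 U \<subseteq> M" and x: "x \<in> C" and y: "y \<in> C" and z: "z \<in> C"
    and yz: "lt (mul e y) (mul e z)"
  shows "mul x (add y z) = add (mul x y) (mul x z)"
proof (cases "mul e (mul x y) = mul e (mul x z)")
  case True
  have "mul (mul e y) x = mul e (mul z x)"
    using e_mult_assoc[OF y x] mult_comm[OF x y] mult_comm[OF x z] True by simp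
  then have "NC_product U (mul z x)"
    using NC_productI[OF z x e_mult_ghost[OF y] yz] by simp
  then have "mul x z \<in> M"
    using NC mult_comm[OF x z] mult_closed[OF z x] by (auto simp: D0_def)
  then have "mul x z = mul e (mul x y)"
    using True ghost_iff by simp
  then show ?thesis
    using add_less[OF y z yz] add_equal[OF True] by simp
next
  case False
  then have "lt (mul e (mul x y)) (mul e (mul x z))"
    using e_mult_le_mono[OF x y z] yz by (simp add: stm_lt_def)
  then show ?thesis
    using add_less[OF y z yz] add_less[OF mult_closed[OF x y] mult_closed[OF x z]] by simp
qed

lemma semiring_if_NC_products_ghost:
  assumes NC: "D0 U \<subseteq> M"
  shows "stm_semiring U"
  unfolding stm_semiring_def
proof (intro conjI ballI)
  show "supertropical_monoid U" by (rule supertropical)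
next
  fix x y z assume "x \<in> C" "y \<in> C" "z \<in> C"
  then show "add (add x y) z = add x (add y z)" by (rule add_assoc)
next
  fix x y z assume x: "x \<in> C" and y: "y \<in> C" and z: "z \<in> C"
  consider "lt (mul e y) (mul e z)" | "lt (mul e z) (mul e y)" | "mul e y = mul e z"
    using lt_trichotomy[OF e_mult_ghost e_mult_ghost, OF y z] by blast
  then show "mul x (add y z) = add (mul x y) (mul x z)"
  proof cases
    case 1
    then show ?thesis by (rule distrib_if_NC_products_ghost[OF NC x y z])
  next
    case 2
    then show ?thesis
      using distrib_if_NC_products_ghost[OF NC x z y] add_comm[OF y z]
        add_comm[OF mult_closed[OF x y] mult_closed[OF x z]] by simp
  next
    case 3
    then have "mul e (mul x y) = mul e (mul x z)"
      using e_mult_distrib[OF x y] e_mult_distrib[OF x z] by simp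
    then show ?thesis
      using add_equal[OF 3] add_equal mult_e_mult[OF x y] by simp
  qed
qed

lemma NC_products_ghost_if_semiring:
  assumes "stm_semiring U"
  shows "D0 U \<subseteq> M"
proof
  fix x assume "x \<in> D0 U"
  then obtain y z y' where y: "y \<in> C" and z: "z \<in> C" and y': "y' \<in> M" and x: "x = mul y z"
    and lt: "lt y' (mul e y)" and eq: "mul y' z = mul e (mul y z)"
    by (auto simp: D0_def elim: NC_productE)
  have y'C: "y' \<in> C" using ghost_closed[OF y'] .
  have "add y' y = y"
    using add_less[OF y'C y] lt y' ghost_iff by simp
  moreover have "mul z (add y' y) = add (mul z y') (mul z y)"
    using assms y z y'C unfolding stm_semiring_def by blast
  ultimately have "mul z y = add (mul z y') (mul z y)"
    by simp
  also have "\<dots> = mul e (mul z y')"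
    using add_equal eq mult_comm y z y'C e_mult_e_mult mult_closed by metis
  finally have "mul z y = mul e (mul z y)"
    using eq mult_comm y z y'C e_mult_e_mult mult_closed by metis
  then show "x \<in> M"
    using x ghost_iff mult_comm[OF y z] mult_closed[OF z y] by simp
qed


abbreviation "D \<equiv> DD U"
abbreviation "E \<equiv> EU U"
abbreviation "sg \<equiv> sigma U"
abbreviation "Q \<equiv> quot U"

lemma D_closed: "x \<in> D \<Longrightarrow> x \<in> C"
  using ghost_closed by (auto simp: DD_def D0_def)

lemma ghost_in_D: "x \<in> M \<Longrightarrow> x \<in> D"
  by (simp add: DD_def)

lemma D_mult:
  assumes x: "x \<in> D" and w: "w \<in> C"
  shows "mul x w \<in> D"
proof (cases "x \<in> M")
  case True
  then show ?thesis using ghost_mult[OF True w] ghost_in_D by blast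
next
  case False
  then obtain y z y' where y: "y \<in> C" and z: "z \<in> C" and y': "y' \<in> M" and xyz: "x = mul y z"
    and lt: "lt y' (mul e y)" and eq: "mul y' z = mul e (mul y z)"
    using x by (auto simp: DD_def D0_def elim: NC_productE)
  have "mul y' (mul z w) = mul e (mul y (mul z w))"
    using mult_assoc[OF ghost_closed[OF y'] z w, symmetric] eq mult_assoc e_closed mult_closed y z w
    by simp
  then have "NC_product U (mul y (mul z w))"
    by (rule NC_productI[OF y mult_closed[OF z w] y' lt])
  then show ?thesis
    using xyz mult_assoc[OF y z w] mult_closed y z w by (simp add: DD_def D0_def)
qed

lemma EU_iff: "(x, y) \<in> E \<longleftrightarrow> x \<in> C \<and> y \<in> C \<and> (x = y \<or> x \<in> D \<and> y \<in> D \<and> mul e x = mul e y)"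
  by (simp add: EU_def E_rel_def)

lemma equiv_EU: "equiv C E"
  unfolding equiv_def refl_on_def sym_def trans_def by (auto simp: EU_def E_rel_def)

lemma EU_e_mult: "(x, y) \<in> E \<Longrightarrow> mul e x = mul e y"
  by (auto simp: EU_iff)

lemma EU_mult_right:
  assumes xy: "(x, y) \<in> E" and w: "w \<in> C"
  shows "(mul x w, mul y w) \<in> E"
  using xy D_mult e_mult_assoc mult_closed w by (auto simp: EU_iff)

lemma EU_mult:
  assumes "(x, x') \<in> E" "(y, y') \<in> E"
  shows "(mul x y, mul x' y') \<in> E"
proof -
  have C: "x \<in> C" "x' \<in> C" "y \<in> C" "y' \<in> C"
    using assms by (auto simp: EU_iff)
  have "(mul x y, mul x' y) \<in> E" "(mul y x', mul y' x') \<in> E"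
    using EU_mult_right assms C by blast+
  then show ?thesis
    using equiv_EU mult_comm C unfolding equiv_def trans_def by metis
qed

lemma sigma_eq_iff: "x \<in> C \<Longrightarrow> y \<in> C \<Longrightarrow> sg x = sg y \<longleftrightarrow> (x, y) \<in> E"
  using equiv_class_eq_iff[OF equiv_EU] by (simp add: sigma_def)

lemma qrep_sigma: "x \<in> C \<Longrightarrow> (qrep (sg x), x) \<in> E"
proof -
  assume "x \<in> C"
  then have "x \<in> sg x"
    using equiv_class_self[OF equiv_EU] by (simp add: sigma_def)
  then have "qrep (sg x) \<in> sg x"
    unfolding qrep_def by (rule someI)
  then show ?thesis
    using equiv_EU by (simp add: sigma_def equiv_def sym_def)
qed

lemma carrier_quot: "stm_carrier Q = sg ` C"
  by (auto simp: quot_def quotient_def sigma_def)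

lemma mult_quot: "x \<in> C \<Longrightarrow> y \<in> C \<Longrightarrow> stm_mult Q (sg x) (sg y) = sg (mul x y)"
  using EU_mult[OF qrep_sigma qrep_sigma] sigma_eq_iff mult_closed by (simp add: quot_def EU_iff)

lemma one_quot: "stm_one Q = sg (stm_one U)"
  and zero_quot: "stm_zero Q = sg (stm_zero U)"
  and e_quot: "stm_e Q = sg e"
  by (simp_all add: quot_def)

lemma le_quot: "x \<in> C \<Longrightarrow> y \<in> C \<Longrightarrow> stm_le Q (sg x) (sg y) \<longleftrightarrow> le (mul e x) (mul e y)"
  using EU_e_mult[OF qrep_sigma] by (simp add: quot_def)

lemma ghosts_quot: "ghosts Q = sg ` M"
proof -
  have "ghosts Q = (\<lambda>x. stm_mult Q (sg e) (sg x)) ` C"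
    by (auto simp: ghosts_def carrier_quot e_quot)
  also have "\<dots> = (\<lambda>x. sg (mul e x)) ` C"
    using mult_quot e_closed by simp
  finally show ?thesis
    by (auto simp: ghosts_def)
qed

lemma sigma_inj_on_ghosts: "inj_on sg M"
proof (rule inj_onI)
  fix g h assume g: "g \<in> M" and h: "h \<in> M" and "sg g = sg h"
  then have "mul e g = mul e h"
    using sigma_eq_iff ghost_closed EU_e_mult by blast
  then show "g = h"
    using g h ghost_iff by simp
qed

lemma le_quot_ghosts: "g \<in> M \<Longrightarrow> h \<in> M \<Longrightarrow> stm_le Q (sg g) (sg h) \<longleftrightarrow> le g h"
  using le_quot ghost_iff by simp

lemma lt_quot_ghosts: "g \<in> M \<Longrightarrow> h \<in> M \<Longrightarrow> stm_lt Q (sg g) (sg h) \<longleftrightarrow> lt g h"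
  using le_quot_ghosts sigma_inj_on_ghosts by (auto simp: stm_lt_def inj_on_def)

lemma supertropical_quot: "supertropical_monoid Q"
  unfolding supertropical_monoid_def Let_def carrier_quot ghosts_quot one_quot zero_quot e_quot
    Ball_image_comp comp_def
proof (intro conjI ballI)
  fix x y assume x: "x \<in> C" and y: "y \<in> C"
  show "stm_mult Q (sg x) (sg y) \<in> sg ` C"
    using mult_quot[OF x y] mult_closed[OF x y] by simp
  show "stm_mult Q (sg x) (sg y) = stm_mult Q (sg y) (sg x)"
    using mult_quot x y mult_comm[OF x y] by simp
  fix z assume z: "z \<in> C"
  show "stm_mult Q (stm_mult Q (sg x) (sg y)) (sg z) = stm_mult Q (sg x) (stm_mult Q (sg y) (sg z))"
    using mult_quot mult_closed mult_assoc[OF x y z] x y z by simp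
next
  fix x assume x: "x \<in> C"
  show "stm_mult Q (sg (stm_one U)) (sg x) = sg x"
    using mult_quot[OF one_closed x] mult_one[OF x] by simp
  show "stm_mult Q (sg (stm_zero U)) (sg x) = sg (stm_zero U)"
    using mult_quot[OF zero_closed x] mult_zero[OF x] by simp
  show "stm_mult Q (sg e) (sg x) = sg (stm_zero U) \<longrightarrow> sg x = sg (stm_zero U)"
  proof
    assume "stm_mult Q (sg e) (sg x) = sg (stm_zero U)"
    then have "sg (mul e x) = sg (stm_zero U)"
      using mult_quot[OF e_closed x] by simp
    then have "mul e x = stm_zero U"
      using sigma_inj_on_ghosts e_mult_ghost[OF x] zero_ghost by (auto simp: inj_on_def)
    then show "sg x = sg (stm_zero U)"
      using e_mult_eq_zero[OF x] by simp
  qed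
next
  show "sg (stm_one U) \<in> sg ` C" "sg (stm_zero U) \<in> sg ` C" "sg e \<in> sg ` C"
    using one_closed zero_closed e_closed by auto
  show "stm_mult Q (sg e) (sg e) = sg e"
    using mult_quot[OF e_closed e_closed] e_idem by simp
next
  fix x assume x: "x \<in> M"
  show "stm_le Q (sg x) (sg x)"
    using le_quot_ghosts[OF x x] le_refl[OF x] by simp
  show "stm_le Q (sg (stm_zero U)) (sg x)"
    using le_quot_ghosts[OF zero_ghost x] zero_le[OF x] by simp
  fix y assume y: "y \<in> M"
  show "stm_le Q (sg x) (sg y) \<and> stm_le Q (sg y) (sg x) \<longrightarrow> sg x = sg y"
    using le_quot_ghosts[OF x y] le_quot_ghosts[OF y x] le_antisym[OF x y] by auto
  show "stm_le Q (sg x) (sg y) \<or> stm_le Q (sg y) (sg x)"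
    using le_quot_ghosts[OF x y] le_quot_ghosts[OF y x] le_total[OF x y] by auto
  fix z assume z: "z \<in> M"
  show "stm_le Q (sg x) (sg y) \<and> stm_le Q (sg y) (sg z) \<longrightarrow> stm_le Q (sg x) (sg z)"
    using le_quot_ghosts[OF x y] le_quot_ghosts[OF y z] le_quot_ghosts[OF x z] le_trans[OF x y z]
    by auto
  have "mul x z \<in> M" "mul y z \<in> M"
    using ghost_mult ghost_closed x y z by blast+
  then show "stm_le Q (sg x) (sg y) \<longrightarrow> stm_le Q (stm_mult Q (sg x) (sg z)) (stm_mult Q (sg y) (sg z))"
    using le_quot_ghosts mult_quot ghost_closed le_mult_right[OF x y z] x y z by auto
qed

lemma NC_products_quot_ghost: "D0 Q \<subseteq> ghosts Q"
proof
  fix X assume "X \<in> D0 Q"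
  then obtain Y Z Y' where Y: "Y \<in> stm_carrier Q" and Z: "Z \<in> stm_carrier Q"
    and Y': "Y' \<in> ghosts Q" and X: "X = stm_mult Q Y Z"
    and lt: "stm_lt Q Y' (stm_mult Q (stm_e Q) Y)"
    and eq: "stm_mult Q Y' Z = stm_mult Q (stm_e Q) (stm_mult Q Y Z)"
    by (auto simp: D0_def NC_product_def)
  obtain y z y' where y: "y \<in> C" "Y = sg y" and z: "z \<in> C" "Z = sg z"
    and y': "y' \<in> M" "Y' = sg y'"
    using Y Z Y' carrier_quot ghosts_quot by auto
  have yz: "mul y z \<in> C" and eyz: "mul e (mul y z) \<in> M"
    using mult_closed e_mult_ghost y z by auto
  have "lt y' (mul e y)"
    using lt lt_quot_ghosts y y' e_quot mult_quot e_closed e_mult_ghost by simp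
  moreover have "mul y' z = mul e (mul y z)"
  proof -
    have "sg (mul y' z) = sg (mul e (mul y z))"
      using eq y z y' mult_quot e_quot e_closed yz ghost_closed by simp
    then show ?thesis
      using sigma_inj_on_ghosts ghost_mult[OF y'(1) z(1)] eyz by (auto simp: inj_on_def)
  qed
  ultimately have "NC_product U (mul y z)"
    using NC_productI y z y' by blast
  then have "(mul y z, mul e (mul y z)) \<in> E"
    using yz eyz ghost_closed e_mult_e_mult ghost_in_D by (auto simp: EU_iff DD_def D0_def)
  then have "X = sg (mul e (mul y z))"
    using X y z mult_quot sigma_eq_iff yz ghost_closed[OF eyz] by simp
  then show "X \<in> ghosts Q"
    using eyz ghosts_quot by simp
qed

lemma semiring_quot: "stm_semiring Q"
proof -
  interpret quot: supertropical Q
    by (rule supertropical.intro[OF supertropical_quot])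
  show ?thesis
    by (rule quot.semiring_if_NC_products_ghost[OF NC_products_quot_ghost])
qed

lemma transmission_ghost:
  assumes "transmission U V \<alpha>" "g \<in> M"
  shows "\<alpha> g \<in> ghosts V"
proof -
  have "\<alpha> (mul e g) = stm_mult V (\<alpha> e) (\<alpha> g)" "\<alpha> e = stm_e V"
    using assms(1) e_closed ghost_closed[OF assms(2)] unfolding transmission_def by blast+
  then have "\<alpha> g = stm_mult V (stm_e V) (\<alpha> g)"
    using assms(2) ghost_iff by simp
  then show ?thesis
    using assms ghost_closed unfolding transmission_def ghosts_def by blast
qed

lemma transmission_NC_product:
  assumes tr: "transmission U V \<alpha>" and inj: "inj_on \<alpha> M" and "NC_product U x"
  shows "NC_product V (\<alpha> x)"
proof -
  obtain y z y' where y: "y \<in> C" and z: "z \<in> C" and y': "y' \<in> M" and x: "x = mul y z"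
    and lt: "lt y' (mul e y)" and eq: "mul y' z = mul e (mul y z)"
    using \<open>NC_product U x\<close> by (rule NC_productE)
  have hom: "\<And>a b. a \<in> C \<Longrightarrow> b \<in> C \<Longrightarrow> \<alpha> (mul a b) = stm_mult V (\<alpha> a) (\<alpha> b)"
    and closed: "\<And>a. a \<in> C \<Longrightarrow> \<alpha> a \<in> stm_carrier V" and \<alpha>e: "\<alpha> e = stm_e V"
    using tr by (simp_all add: transmission_def)
  have "stm_lt V (\<alpha> y') (\<alpha> (mul e y))"
    using tr inj lt y' e_mult_ghost[OF y] unfolding transmission_def stm_lt_def inj_on_def by blast
  then have "stm_lt V (\<alpha> y') (stm_mult V (stm_e V) (\<alpha> y))"
    using hom e_closed y \<alpha>e by simp
  moreover have "stm_mult V (\<alpha> y') (\<alpha> z) = stm_mult V (stm_e V) (stm_mult V (\<alpha> y) (\<alpha> z))"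
    using arg_cong[OF eq, of \<alpha>] hom ghost_closed[OF y'] z y mult_closed e_closed \<alpha>e by simp
  ultimately show ?thesis
    unfolding NC_product_def
    using x hom y z closed transmission_ghost[OF tr y'] by blast
qed

lemma transmission_collapses_D:
  assumes V: "stm_semiring V" and tr: "transmission U V \<alpha>" and inj: "inj_on \<alpha> M"
    and x: "x \<in> D"
  shows "\<alpha> x = \<alpha> (mul e x)"
proof (cases "x \<in> M")
  case True
  then show ?thesis by (simp add: ghost_iff)
next
  case False
  interpret target: supertropical V
    using V by (simp add: supertropical.intro stm_semiring_def)
  have xC: "x \<in> C" using D_closed[OF x] .
  have "NC_product V (\<alpha> x)"
    using False x transmission_NC_product[OF tr inj] by (simp add: DD_def D0_def)
  then have "\<alpha> x \<in> ghosts V"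
    using target.NC_products_ghost_if_semiring[OF V] tr xC by (auto simp: D0_def transmission_def)
  then show ?thesis
    using tr xC e_closed target.ghost_iff by (simp add: transmission_def)
qed

lemma fiber_contraction_quot:
  assumes fc: "fiber_contraction U V \<alpha>" and resp: "\<And>x y. (x, y) \<in> E \<Longrightarrow> \<alpha> x = \<alpha> y"
  shows "fiber_contraction Q V (\<lambda>X. \<alpha> (qrep X))"
proof -
  have tr: "transmission U V \<alpha>" and onto: "\<alpha> ` C = stm_carrier V"
    and bij: "bij_betw \<alpha> M (ghosts V)"
    and ord: "\<And>g h. g \<in> M \<Longrightarrow> h \<in> M \<Longrightarrow> stm_le V (\<alpha> g) (\<alpha> h) \<longleftrightarrow> le g h"
    using fc by (auto simp: fiber_contraction_def)
  define \<beta> where "\<beta> X = \<alpha> (qrep X)" for X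
  have \<beta>: "\<beta> (sg x) = \<alpha> x" if "x \<in> C" for x
    using resp qrep_sigma that by (simp add: \<beta>_def)
  have \<beta>_image: "\<beta> ` sg ` A = \<alpha> ` A" if "A \<subseteq> C" for A
    using \<beta> that by (force simp: image_iff)
  have "transmission Q V \<beta>"
    unfolding transmission_def carrier_quot ghosts_quot one_quot zero_quot e_quot
      Ball_image_comp comp_def
    using tr \<beta> one_closed zero_closed e_closed mult_closed mult_quot ghost_closed le_quot_ghosts
    by (simp add: transmission_def)
  moreover have "bij_betw \<beta> (ghosts Q) (ghosts V)"
  proof -
    have "inj_on \<beta> (sg ` M)"
      using bij \<beta> ghost_closed by (auto simp: inj_on_def bij_betw_def)
    moreover have "M \<subseteq> C"
      using ghost_closed by blast
    ultimately show ?thesis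
      using bij \<beta>_image[of M] by (simp add: bij_betw_def ghosts_quot)
  qed
  ultimately show ?thesis
    using onto \<beta>_image[of C] ord \<beta> ghost_closed le_quot_ghosts
    by (simp add: fiber_contraction_def carrier_quot ghosts_quot \<beta>_def[symmetric])
qed

lemma quot_universal:
  fixes V :: "('b, 'n) stm_scheme"
  assumes V: "stm_semiring V" and fc: "fiber_contraction U V \<alpha>"
  shows "\<exists>\<beta>. fiber_contraction Q V \<beta> \<and> (\<forall>x\<in>C. \<alpha> x = \<beta> (sg x)) \<and>
    (\<forall>\<beta>'. (\<forall>x\<in>C. \<alpha> x = \<beta>' (sg x)) \<longrightarrow> (\<forall>X\<in>stm_carrier Q. \<beta>' X = \<beta> X))"
proof (intro exI conjI allI impI ballI)
  have tr: "transmission U V \<alpha>" and inj: "inj_on \<alpha> M"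
    using fc by (auto simp: fiber_contraction_def bij_betw_def)
  have resp: "\<alpha> x = \<alpha> y" if "(x, y) \<in> E" for x y
    using that transmission_collapses_D[OF V tr inj] by (auto simp: EU_iff)
  show "fiber_contraction Q V (\<lambda>X. \<alpha> (qrep X))"
    using fiber_contraction_quot[OF fc resp] .
  show factor: "\<alpha> x = \<alpha> (qrep (sg x))" if "x \<in> C" for x
    using resp qrep_sigma that by metis
  show "\<beta>' X = \<alpha> (qrep X)" if "\<forall>x\<in>C. \<alpha> x = \<beta>' (sg x)" and "X \<in> stm_carrier Q" for \<beta>' X
    using that factor carrier_quot by auto
qed

end

theorem theorem4p5:
  fixes U :: "'a stm"
  assumes "supertropical_monoid U"
  shows "stm_semiring (quot U)
    \<and> (\<forall>(V :: 'b stm) \<alpha>. stm_semiring V \<and> fiber_contraction U V \<alpha> \<longrightarrow>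
         (\<exists>\<beta>. fiber_contraction (quot U) V \<beta> \<and>
               (\<forall>x\<in>stm_carrier U. \<alpha> x = \<beta> (sigma U x)) \<and>
               (\<forall>\<beta>'. fiber_contraction (quot U) V \<beta>' \<and>
                      (\<forall>x\<in>stm_carrier U. \<alpha> x = \<beta>' (sigma U x)) \<longrightarrow>
                      (\<forall>X\<in>stm_carrier (quot U). \<beta>' X = \<beta> X))))
    \<and> (\<forall>(V :: 'a stm) \<alpha>. stm_semiring V \<and> fiber_contraction_over U V \<alpha> \<longrightarrow>
         (\<exists>\<beta>. fiber_contraction (quot U) V \<beta> \<and>
               (\<forall>x\<in>stm_carrier U. \<alpha> x = \<beta> (sigma U x)) \<and>
               (\<forall>y\<in>ghosts U. \<beta> (sigma U y) = y)))"
proof (intro conjI allI impI)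
  interpret supertropical U
    by (rule supertropical.intro[OF assms])
  show "stm_semiring (quot U)"
    by (rule semiring_quot)
  show "\<exists>\<beta>. fiber_contraction (quot U) V \<beta> \<and> (\<forall>x\<in>C. \<alpha> x = \<beta> (sg x)) \<and>
      (\<forall>\<beta>'. fiber_contraction (quot U) V \<beta>' \<and> (\<forall>x\<in>C. \<alpha> x = \<beta>' (sg x)) \<longrightarrow>
        (\<forall>X\<in>stm_carrier (quot U). \<beta>' X = \<beta> X))"
    if "stm_semiring V \<and> fiber_contraction U V \<alpha>" for V :: "'b stm" and \<alpha>
    using quot_universal that by blast
  show "\<exists>\<beta>. fiber_contraction (quot U) V \<beta> \<and> (\<forall>x\<in>C. \<alpha> x = \<beta> (sg x)) \<and>
      (\<forall>y\<in>M. \<beta> (sg y) = y)"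
    if "stm_semiring V \<and> fiber_contraction_over U V \<alpha>" for V :: "'a stm" and \<alpha>
  proof -
    have "stm_semiring V" "fiber_contraction U V \<alpha>" and fixes_M: "\<forall>y\<in>M. \<alpha> y = y"
      using that by (auto simp: fiber_contraction_over_def)
    then obtain \<beta> where "fiber_contraction (quot U) V \<beta>" and "\<forall>x\<in>C. \<alpha> x = \<beta> (sg x)"
      using quot_universal by blast
    then show ?thesis
      using fixes_M ghost_closed by metis
  qed
qed

end
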